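(* Let $(M,g)$ be a spherically symmetric spacetime and let $V\subset M$ be a region covered by comoving coordinates $(t,R,\theta,\psi)$ with $0\le t<T$ and $0\le R<R_b$, for some $T\in(0,+\infty]$ and $R_b>0$, in which \[ g=-e^{2\Phi}\,dt^2+e^{2\Psi}\,dR^2+r^2\,d\Omega^2,\qquad u=e^{-\Phi}\partial_t, \] where $\Phi,\Psi,r$ are functions of $(t,R)$ and $d\Omega^2=d\theta^2+\sin^2\theta\, d\psi^2$. Assume the coordinates are normalized so that $\Phi(t,R_b)=0$ and $r(0,R)=R$. Let $\sigma>0$ be a constant and let $(g,\rho,n,u,\phi)$ be a spherically symmetric solution on $V$ of the following system describing a pressureless fluid (dust, $p=0$) with energy density $\rho$, particle number density $n$ and four-velocity $u$, together with a scalar field $\phi$: \[ \nabla_\mu(\rho u^\mu)=\sigma n,\qquad \rho\, u^\mu\nabla_\mu u^\nu=0,\qquad \nabla_\mu(n u^\mu)=0, \] \[ R_{\mu\nu}-\tfrac12 g_{\mu\nu}\mathcal R+\phi\, g_{\mu\nu}=T_{\mu\nu},\qquad \nabla_\nu\phi=\sigma J_\nu, \] where $T^{\mu\nu}=\rho u^\mu u^\nu$, $J^\mu=n u^\mu$, $R_{\mu\nu}$ is the Ricci tensor and $\mathcal R$ the scalar curvature of $g$ (units $8\pi G=c=1$). Assume $\rho$ and $n$ are nowhere vanishing on $V$. Then $\rho$, $n$ and $\phi$ are functions of $t\in[0,T)$ only, and there exist a positive function $a:[0,T)\to(0,\infty)$ and a constant $k\in\mathbb R$ such that on $V$ \[ g=-dt^2+a(t)^2\Big(\frac{dR^2}{1-kR^2}+R^2d\Omega^2\Big),\qquad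 u=\partial_t. \]
   Context: The fluid is a perfect fluid with zero pressure; the system above is the projection (along $u$ and orthogonal to $u$) of the diffusion equation $\nabla_\mu T^{\mu\nu}=\sigma J^\nu$ with $p=0$, together with particle number conservation, the Einstein equations with the scalar field $\phi$ (whose energy-momentum tensor is $-\phi g_{\mu\nu}$), and the scalar field equation. Comoving coordinates are coordinates in which the fluid four-velocity is proportional to $\partial_t$; the center of symmetry is $r=0$. *)

theory Defs
  imports "HOL-Analysis.Analysis"
begin

text \<open>Points of the coordinate chart are represented as functions nat => real;
  only the components 0..3 = (t, R, theta, psi) are used.\<close>

type_synonym pt = "nat \<Rightarrow> real"
type_synonym metric = "pt \<Rightarrow> nat \<Rightarrow> nat \<Rightarrow> real"
type_synonym vfield = "pt \<Rightarrow> nat \<Rightarrow> real"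

definition pd :: "nat \<Rightarrow> (pt \<Rightarrow> real) \<Rightarrow> pt \<Rightarrow> real" where
  "pd i F x = deriv (\<lambda>s. F (x(i := s))) (x i)"

definition dt :: "(real \<Rightarrow> real \<Rightarrow> real) \<Rightarrow> real \<Rightarrow> real \<Rightarrow> real" where
  "dt f = (\<lambda>t R. deriv (\<lambda>s. f s R) t)"
definition dR :: "(real \<Rightarrow> real \<Rightarrow> real) \<Rightarrow> real \<Rightarrow> real \<Rightarrow> real" where
  "dR f = (\<lambda>t R. deriv (\<lambda>s. f t s) R)"

fun Ck :: "nat \<Rightarrow> (real \<times> real) set \<Rightarrow> (real \<Rightarrow> real \<Rightarrow> real) \<Rightarrow> bool" where
  "Ck 0 S f = continuous_on S (\<lambda>(t,R). f t R)"
| "Ck (Suc k) S f = (continuous_on S (\<lambda>(t,R). f t R) \<and>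
      (\<forall>(t,R)\<in>S. (\<lambda>s. f s R) differentiable (at t) \<and> (\<lambda>s. f t s) differentiable (at R)) \<and>
      Ck k S (dt f) \<and> Ck k S (dR f))"

definition smooth2 :: "(real \<times> real) set \<Rightarrow> (real \<Rightarrow> real \<Rightarrow> real) \<Rightarrow> bool" where
  "smooth2 S f = (\<forall>k. Ck k S f)"

definition sph_metric :: "(real \<Rightarrow> real \<Rightarrow> real) \<Rightarrow> (real \<Rightarrow> real \<Rightarrow> real) \<Rightarrow>
    (real \<Rightarrow> real \<Rightarrow> real) \<Rightarrow> metric" where
  "sph_metric \<Phi> \<Psi> r x i j =
     (if i \<noteq> j then 0
      else if i = 0 then - exp (2 * \<Phi> (x 0) (x 1))
      else if i = 1 then exp (2 * \<Psi> (x 0) (x 1))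
      else if i = 2 then (r (x 0) (x 1))\<^sup>2
      else if i = 3 then (r (x 0) (x 1))\<^sup>2 * (sin (x 2))\<^sup>2
      else 0)"

definition frw_metric :: "(real \<Rightarrow> real) \<Rightarrow> real \<Rightarrow> metric" where
  "frw_metric a k x i j =
     (if i \<noteq> j then 0
      else if i = 0 then -1
      else if i = 1 then (a (x 0))\<^sup>2 / (1 - k * (x 1)\<^sup>2)
      else if i = 2 then (a (x 0))\<^sup>2 * (x 1)\<^sup>2
      else if i = 3 then (a (x 0))\<^sup>2 * (x 1)\<^sup>2 * (sin (x 2))\<^sup>2
      else 0)"

text \<open>Inverse of a diagonal metric (the metrics above are diagonal).\<close>
definition diag_inv :: "metric \<Rightarrow> metric" where
  "diag_inv g x i j = (if i = j then 1 / g x i i else 0)"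

definition christoffel :: "metric \<Rightarrow> pt \<Rightarrow> nat \<Rightarrow> nat \<Rightarrow> nat \<Rightarrow> real" where
  "christoffel g x a b c = (1/2) * (\<Sum>d<4. diag_inv g x a d *
      (pd b (\<lambda>y. g y d c) x + pd c (\<lambda>y. g y d b) x - pd d (\<lambda>y. g y b c) x))"

definition ricci :: "metric \<Rightarrow> pt \<Rightarrow> nat \<Rightarrow> nat \<Rightarrow> real" where
  "ricci g x b c = (\<Sum>a<4. pd a (\<lambda>y. christoffel g y a b c) x
      - pd c (\<lambda>y. christoffel g y a a b) x
      + (\<Sum>d<4. christoffel g x a a d * christoffel g x d b c
               - christoffel g x a c d * christoffel g x d a b))"

definition scalar_curv :: "metric \<Rightarrow> pt \<Rightarrow> real" where
  "scalar_curv g x = (\<Sum>b<4. \<Sum>c<4. diag_inv g x b c * ricci g x b c)"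

definition divergence :: "metric \<Rightarrow> vfield \<Rightarrow> pt \<Rightarrow> real" where
  "divergence g W x = (\<Sum>m<4. pd m (\<lambda>y. W y m) x)
      + (\<Sum>m<4. \<Sum>l<4. christoffel g x m m l * W x l)"

definition cov_deriv :: "metric \<Rightarrow> vfield \<Rightarrow> pt \<Rightarrow> nat \<Rightarrow> nat \<Rightarrow> real" where
  "cov_deriv g W x m \<nu> = pd m (\<lambda>y. W y \<nu>) x + (\<Sum>l<4. christoffel g x \<nu> m l * W x l)"

definition lower :: "metric \<Rightarrow> vfield \<Rightarrow> pt \<Rightarrow> nat \<Rightarrow> real" where
  "lower g W x m = (\<Sum>a<4. g x m a * W x a)"

definition lift :: "(real \<Rightarrow> real \<Rightarrow> real) \<Rightarrow> pt \<Rightarrow> real" where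
  "lift f x = f (x 0) (x 1)"

end

theory Submission
  imports Defs
begin

text \<open>The geodesic equation of dust forces the lapse to be independent of \<open>R\<close>, so the
  normalisation at \<open>R = Rb\<close> makes comoving time proper time. The scalar field equation then
  gives \<open>\<partial>\<^sub>R \<phi> = 0\<close> and \<open>\<partial>\<^sub>t \<phi> = -\<sigma> n\<close>, so \<open>\<phi>\<close> and \<open>n\<close> are spatially homogeneous.
  Particle conservation says that \<open>e\<^sup>\<Psi> r\<^sup>2 n\<close> is constant in time, and combined with the
  \<open>tR\<close> Einstein equation \<open>\<partial>\<^sub>R \<partial>\<^sub>t r = \<partial>\<^sub>t \<Psi> \<partial>\<^sub>R r\<close> it shows that the particle number
  \<open>n r\<^sup>3\<close> between two comoving spheres is conserved. Comparing with the centre and with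
  \<open>t = 0\<close>, where \<open>r = R\<close>, yields \<open>r = a(t) R\<close> and \<open>e\<^sup>\<Psi>\<^sup>(\<^sup>t\<^sup>,\<^sup>R\<^sup>) = a(t) e\<^sup>\<Psi>\<^sup>(\<^sup>0\<^sup>,\<^sup>R\<^sup>)\<close>.
  Isotropy of the spatial stresses then makes \<open>(1 - e\<^sup>-\<^sup>2\<^sup>\<Psi>\<^sup>(\<^sup>0\<^sup>,\<^sup>R\<^sup>)) / R\<^sup>2\<close> a constant
  \<open>k\<close>, and the \<open>tt\<close> equation expresses \<open>\<rho>\<close> through \<open>a\<close> and \<open>k\<close> alone.\<close>

lemma smooth2_dt: "smooth2 S f \<Longrightarrow> smooth2 S (dt f)"
  unfolding smooth2_def by (metis Ck.simps(2))

lemma smooth2_dR: "smooth2 S f \<Longrightarrow> smooth2 S (dR f)"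
  unfolding smooth2_def by (metis Ck.simps(2))

lemma smooth2_has_dt:
  assumes "smooth2 S f" "(t,R) \<in> S"
  shows "((\<lambda>s. f s R) has_real_derivative dt f t R) (at t)"
proof -
  have "Ck (Suc 0) S f" using assms(1) unfolding smooth2_def by blast
  then have "(\<lambda>s. f s R) differentiable (at t)" using assms(2) by auto
  then show ?thesis unfolding dt_def using DERIV_deriv_iff_real_differentiable by blast
qed

lemma smooth2_has_dR:
  assumes "smooth2 S f" "(t,R) \<in> S"
  shows "((\<lambda>s. f t s) has_real_derivative dR f t R) (at R)"
proof -
  have "Ck (Suc 0) S f" using assms(1) unfolding smooth2_def by blast
  then have "(\<lambda>s. f t s) differentiable (at R)" using assms(2) by auto
  then show ?thesis unfolding dR_def using DERIV_deriv_iff_real_differentiable by blast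
qed

lemma deriv_fold_dt: "deriv (\<lambda>s. f s R) t = dt f t R"
  by (simp add: dt_def)

lemma deriv_fold_dR: "deriv (\<lambda>s. f t s) R = dR f t R"
  by (simp add: dR_def)

lemma pd_const: "pd i (\<lambda>y. c) x = 0"
  by (simp add: pd_def)

lemma sum_lessThan_4: "(\<Sum>d<(4::nat). F d) = F 0 + F 1 + F 2 + (F 3 :: real)"
  by (simp add: eval_nat_numeral)

lemma open_ereal_less: "open {s::real. ereal s < T}"
  using open_ereal_vimage[OF open_lessThan[of T]] by (simp add: vimage_def)

definition open_rect :: "ereal \<Rightarrow> real \<Rightarrow> (real \<times> real) set" where
  "open_rect T Rb = {(t,R). 0 < t \<and> ereal t < T \<and> 0 < R \<and> R < Rb}"

definition closed_rect :: "ereal \<Rightarrow> real \<Rightarrow> (real \<times> real) set" where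
  "closed_rect T Rb = {(t,R). 0 \<le> t \<and> ereal t < T \<and> 0 \<le> R \<and> R \<le> Rb}"

definition chart_dom :: "ereal \<Rightarrow> real \<Rightarrow> pt set" where
  "chart_dom T Rb = {x. (x 0, x 1) \<in> open_rect T Rb \<and> 0 < x 2 \<and> x 2 < pi}"

lemma chart_dom_open_rect: "y \<in> chart_dom T Rb \<Longrightarrow> (y 0, y (Suc 0)) \<in> open_rect T Rb"
  by (simp add: chart_dom_def)

lemma chart_dom_theta: "y \<in> chart_dom T Rb \<Longrightarrow> 0 < y 2 \<and> y 2 < pi"
  by (simp add: chart_dom_def)

lemma open_rect_closed_rect: "p \<in> open_rect T Rb \<Longrightarrow> p \<in> closed_rect T Rb"
  by (auto simp: open_rect_def closed_rect_def)

lemma eventually_update_chart_dom: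
  assumes "x \<in> chart_dom T Rb"
  shows "eventually (\<lambda>s. x(i := s) \<in> chart_dom T Rb) (nhds (x i))"
proof -
  define A where "A = (if i = 0 then {0<..} \<inter> {s. ereal s < T} else if i = 1 then {0<..<Rb}
    else if i = 2 then {0<..<pi} else UNIV)"
  have "open A" using open_ereal_less by (auto simp: A_def)
  moreover have "x i \<in> A" using assms by (auto simp: A_def chart_dom_def open_rect_def)
  ultimately have "eventually (\<lambda>s. s \<in> A) (nhds (x i))" by (rule eventually_nhds_in_open)
  then show ?thesis
    by (rule eventually_mono) (use assms in \<open>auto simp: A_def chart_dom_def open_rect_def split: if_splits\<close>)
qed

lemma pd_cong_chart_dom:
  assumes "x \<in> chart_dom T Rb" "\<And>y. y \<in> chart_dom T Rb \<Longrightarrow> F y = G y"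
  shows "pd i F x = pd i G x"
  unfolding pd_def
  by (rule deriv_cong_ev[OF _ refl])
    (use eventually_update_chart_dom[OF assms(1), of i] assms(2) in \<open>auto elim: eventually_mono\<close>)

lemma dt_local:
  assumes "(t,R) \<in> open_rect T Rb" "\<And>s. (s,R) \<in> open_rect T Rb \<Longrightarrow> f s R = h s"
  shows "dt f t R = deriv h t"
proof -
  have "open ({0<..} \<inter> {s. ereal s < T})" by (intro open_Int open_greaterThan open_ereal_less)
  moreover have "t \<in> {0<..} \<inter> {s. ereal s < T}" using assms(1) by (auto simp: open_rect_def)
  ultimately have "eventually (\<lambda>s. s \<in> {0<..} \<inter> {s. ereal s < T}) (nhds t)"
    by (rule eventually_nhds_in_open)
  then show ?thesis unfolding dt_def
    by (rule deriv_cong_ev[OF _ refl, OF eventually_mono])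
      (use assms in \<open>auto simp: open_rect_def\<close>)
qed

lemma dR_local:
  assumes "(t,R) \<in> open_rect T Rb" "\<And>s. (t,s) \<in> open_rect T Rb \<Longrightarrow> f t s = h s"
  shows "dR f t R = deriv h R"
proof -
  have "eventually (\<lambda>s. s \<in> {0<..<Rb}) (nhds R)"
    using assms(1) by (intro eventually_nhds_in_open) (auto simp: open_rect_def)
  then show ?thesis unfolding dR_def
    by (rule deriv_cong_ev[OF _ refl, OF eventually_mono])
      (use assms in \<open>auto simp: open_rect_def\<close>)
qed

text \<open>Every point of \<open>closed_rect\<close> is a limit of points of \<open>open_rect\<close>, approached along the
  segment towards an interior point.\<close>
lemma continuous_on_closed_rect_eq:
  fixes F G :: "real \<times> real \<Rightarrow> real"
  assumes Rb: "0 < Rb" and cF: "continuous_on (closed_rect T Rb) F"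
    and cG: "continuous_on (closed_rect T Rb) G"
    and eq: "\<And>t R. (t,R) \<in> open_rect T Rb \<Longrightarrow> F (t,R) = G (t,R)" and p: "p \<in> closed_rect T Rb"
  shows "F p = G p"
proof -
  obtain t R where pe: "p = (t,R)" by (cases p)
  have tR: "0 \<le> t" "ereal t < T" "0 \<le> R" "R \<le> Rb" using p pe by (auto simp: closed_rect_def)
  obtain t1 where t1: "ereal t < ereal t1" "ereal t1 < T" using ereal_dense2[OF tR(2)] by blast
  define w where "w k = inverse (real (Suc k)) / 2" for k
  have w: "0 < w k" "w k < 1" for k
    by (auto simp: w_def field_simps)
  have wlim: "w \<longlonglongrightarrow> 0"
    unfolding w_def using tendsto_divide[OF LIMSEQ_inverse_real_of_nat tendsto_const[of 2]] by simp
  define s where "s k = (t + (t1 - t) * w k, R + (Rb/2 - R) * w k)" for k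
  have s_open: "s k \<in> open_rect T Rb" for k
  proof -
    have "t < t + (t1 - t) * w k" "(t1 - t) * w k < (t1 - t) * 1"
      using t1(1) w[of k] by (auto intro: mult_strict_left_mono)
    moreover have "ereal (t + (t1 - t) * w k) < T"
    proof -
      have "ereal (t + (t1 - t) * w k) < ereal t1" using \<open>(t1 - t) * w k < (t1 - t) * 1\<close> by simp
      then show ?thesis using t1(2) by (rule less_trans)
    qed
    moreover have "0 < R + (Rb/2 - R) * w k" "R + (Rb/2 - R) * w k < Rb"
    proof -
      have "R + (Rb/2 - R) * w k = (1 - w k) * R + w k * (Rb/2)" by (simp add: algebra_simps)
      moreover have "0 \<le> (1 - w k) * R" "(1 - w k) * R \<le> (1 - w k) * Rb"
        using w[of k] tR by (auto intro: mult_left_mono)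
      moreover have "0 < w k * (Rb/2)" "w k * (Rb/2) < w k * Rb" using w[of k] Rb by auto
      ultimately show "0 < R + (Rb/2 - R) * w k" "R + (Rb/2 - R) * w k < Rb"
        by (simp_all add: algebra_simps)
    qed
    ultimately show ?thesis using tR by (simp add: s_def open_rect_def)
  qed
  have "s \<longlonglongrightarrow> (t + (t1 - t) * 0, R + (Rb/2 - R) * 0)"
    unfolding s_def by (intro tendsto_intros wlim)
  then have slim: "s \<longlonglongrightarrow> p" by (simp add: pe)
  have "(F \<circ> s) \<longlonglongrightarrow> F p" "(G \<circ> s) \<longlonglongrightarrow> G p"
    using cF cG p open_rect_closed_rect[OF s_open] slim by (auto simp: continuous_on_sequentially)
  moreover have "F (s k) = G (s k)" for k
    using eq[of "fst (s k)" "snd (s k)"] s_open[of k] by simp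
  then have "F \<circ> s = G \<circ> s" by (simp add: fun_eq_iff)
  ultimately show ?thesis using LIMSEQ_unique by metis
qed

lemma continuous_on_compose_pair:
  assumes "continuous_on S (\<lambda>(t,R). f t R)" "continuous_on A h1" "continuous_on A h2"
    and "\<And>p. p \<in> A \<Longrightarrow> (h1 p, h2 p) \<in> S"
  shows "continuous_on A (\<lambda>p. f (h1 p) (h2 p))"
  using continuous_on_compose2[OF assms(1) continuous_on_Pair[OF assms(2,3)]] assms(4) by auto

lemma deriv_cos_over_sin:
  assumes "0 < \<theta>" "\<theta> < pi"
  shows "deriv (\<lambda>s. cos s / sin s) \<theta> = - 1 / (sin \<theta>)\<^sup>2"
proof -
  have "sin \<theta> > 0" using assms by (simp add: sin_gt_zero)
  moreover have "cos \<theta> * (cos \<theta> * (sin \<theta> * sin \<theta>)) + sin \<theta> * (sin \<theta> * (sin \<theta> * sin \<theta>))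
      = sin \<theta> * sin \<theta>"
    using sin_cos_squared_add3[of \<theta>] by algebra
  ultimately show ?thesis
    by (intro DERIV_imp_deriv) (auto intro!: derivative_eq_intros simp: power2_eq_square field_simps)
qed

lemma sph_metric_diag: "i \<noteq> j \<Longrightarrow> sph_metric \<Phi> \<Psi> r y i j = 0"
  by (simp add: sph_metric_def)

lemma christoffel_diagonal:
  assumes diag: "\<And>y i j. i \<noteq> j \<Longrightarrow> G y i j = 0" and a: "a < 4"
  shows "christoffel G x a b c = (1/2) * (1 / G x a a) *
     ((if a = c then pd b (\<lambda>y. G y a a) x else 0) + (if a = b then pd c (\<lambda>y. G y a a) x else 0)
      - (if b = c then pd a (\<lambda>y. G y b b) x else 0))"
proof -
  have off: "pd k (\<lambda>y. G y i j) x = 0" if "i \<noteq> j" for k i j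
    using diag[OF that] by (simp add: pd_const)
  have "a = 0 \<or> a = 1 \<or> a = 2 \<or> a = 3" using a by arith
  then have "christoffel G x a b c = (1/2) * ((1 / G x a a) *
      (pd b (\<lambda>y. G y a c) x + pd c (\<lambda>y. G y a b) x - pd a (\<lambda>y. G y b c) x))"
    unfolding christoffel_def diag_inv_def sum_lessThan_4 by (elim disjE) (simp_all add: field_simps)
  then show ?thesis
    by (cases "a = c"; cases "a = b"; cases "b = c") (auto simp: off)
qed

section \<open>Curvature of a comoving metric with unit lapse\<close>

locale comoving_metric =
  fixes \<Psi> r :: "real \<Rightarrow> real \<Rightarrow> real" and T :: ereal and Rb :: real
  assumes smooth_Psi: "smooth2 (open_rect T Rb) \<Psi>" and smooth_r: "smooth2 (open_rect T Rb) r"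
    and r_pos: "\<And>t R. 0 \<le> t \<Longrightarrow> ereal t < T \<Longrightarrow> 0 < R \<Longrightarrow> R < Rb \<Longrightarrow> 0 < r t R"
begin

abbreviation "g0 \<equiv> sph_metric (\<lambda>_ _. 0) \<Psi> r"

lemma r_pos_open: "(t,R) \<in> open_rect T Rb \<Longrightarrow> 0 < r t R"
  by (simp add: open_rect_def r_pos)

lemmas smooth_derivs = smooth_Psi smooth_r smooth2_dt[OF smooth_Psi] smooth2_dR[OF smooth_Psi]
  smooth2_dt[OF smooth_r] smooth2_dR[OF smooth_r] smooth2_dt[OF smooth2_dt[OF smooth_r]]
  smooth2_dR[OF smooth2_dR[OF smooth_r]] smooth2_dR[OF smooth2_dt[OF smooth_r]]
  smooth2_dt[OF smooth2_dt[OF smooth_Psi]] smooth2_dR[OF smooth2_dR[OF smooth_Psi]]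

lemma deriv_g0_components:
  assumes y: "y \<in> chart_dom T Rb"
  shows "deriv (\<lambda>s. exp (2 * \<Psi> s (y (Suc 0)))) (y 0)
      = 2 * dt \<Psi> (y 0) (y (Suc 0)) * exp (2 * \<Psi> (y 0) (y (Suc 0)))"
    and "deriv (\<lambda>s. exp (2 * \<Psi> (y 0) s)) (y (Suc 0))
      = 2 * dR \<Psi> (y 0) (y (Suc 0)) * exp (2 * \<Psi> (y 0) (y (Suc 0)))"
    and "deriv (\<lambda>s. (r s (y (Suc 0)))\<^sup>2) (y 0) = 2 * r (y 0) (y (Suc 0)) * dt r (y 0) (y (Suc 0))"
    and "deriv (\<lambda>s. (r (y 0) s)\<^sup>2) (y (Suc 0)) = 2 * r (y 0) (y (Suc 0)) * dR r (y 0) (y (Suc 0))"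
    and "deriv (\<lambda>s. (r s (y (Suc 0)))\<^sup>2 * (sin (y 2))\<^sup>2) (y 0)
      = 2 * r (y 0) (y (Suc 0)) * dt r (y 0) (y (Suc 0)) * (sin (y 2))\<^sup>2"
    and "deriv (\<lambda>s. (r (y 0) s)\<^sup>2 * (sin (y 2))\<^sup>2) (y (Suc 0))
      = 2 * r (y 0) (y (Suc 0)) * dR r (y 0) (y (Suc 0)) * (sin (y 2))\<^sup>2"
    and "deriv (\<lambda>s. (r (y 0) (y (Suc 0)))\<^sup>2 * (sin s)\<^sup>2) (y 2)
      = (r (y 0) (y (Suc 0)))\<^sup>2 * (2 * sin (y 2) * cos (y 2))"
  using chart_dom_open_rect[OF y]
  by (auto intro!: DERIV_imp_deriv derivative_eq_intros smooth2_has_dt smooth2_has_dR smooth_derivs)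

text \<open>\<open>chr0 a b c y\<close> is \<open>\<Gamma>\<^sup>a\<^sub>b\<^sub>c\<close> at \<open>y\<close>.\<close>
definition chr0 :: "nat \<Rightarrow> nat \<Rightarrow> nat \<Rightarrow> pt \<Rightarrow> real" where
"chr0 a b c y = (
 if a = 0 then (if b = 1 \<and> c = 1 then dt \<Psi> (y 0) (y 1) * exp (2 * \<Psi> (y 0) (y 1))
   else if b = 2 \<and> c = 2 then r (y 0) (y 1) * dt r (y 0) (y 1)
   else if b = 3 \<and> c = 3 then r (y 0) (y 1) * dt r (y 0) (y 1) * (sin (y 2))\<^sup>2 else 0)
 else if a = 1 then (if (b = 0 \<and> c = 1) \<or> (b = 1 \<and> c = 0) then dt \<Psi> (y 0) (y 1)
   else if b = 1 \<and> c = 1 then dR \<Psi> (y 0) (y 1)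
   else if b = 2 \<and> c = 2 then - (r (y 0) (y 1) * dR r (y 0) (y 1) * exp (- (2 * \<Psi> (y 0) (y 1))))
   else if b = 3 \<and> c = 3
     then - (r (y 0) (y 1) * dR r (y 0) (y 1) * (sin (y 2))\<^sup>2 * exp (- (2 * \<Psi> (y 0) (y 1))))
   else 0)
 else if a = 2 then (if (b = 0 \<and> c = 2) \<or> (b = 2 \<and> c = 0) then dt r (y 0) (y 1) / r (y 0) (y 1)
   else if (b = 1 \<and> c = 2) \<or> (b = 2 \<and> c = 1) then dR r (y 0) (y 1) / r (y 0) (y 1)
   else if b = 3 \<and> c = 3 then - (sin (y 2) * cos (y 2)) else 0)
 else if a = 3 then (if (b = 0 \<and> c = 3) \<or> (b = 3 \<and> c = 0) then dt r (y 0) (y 1) / r (y 0) (y 1)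
   else if (b = 1 \<and> c = 3) \<or> (b = 3 \<and> c = 1) then dR r (y 0) (y 1) / r (y 0) (y 1)
   else if (b = 2 \<and> c = 3) \<or> (b = 3 \<and> c = 2) then cos (y 2) / sin (y 2) else 0)
 else 0)"

lemma r_nonzero: "x \<in> chart_dom T Rb \<Longrightarrow> r (x 0) (x (Suc 0)) \<noteq> 0"
  using r_pos_open[OF chart_dom_open_rect] by force

lemma christoffel_g0:
  assumes y: "y \<in> chart_dom T Rb" and abc: "a < 4" "b < 4" "c < 4"
  shows "christoffel g0 y a b c = chr0 a b c y"
proof -
  have r0: "r (y 0) (y (Suc 0)) \<noteq> 0" using r_nonzero[OF y] .
  have s0: "sin (y 2) \<noteq> 0" using chart_dom_theta[OF y] sin_gt_zero by force
  have "a = 0 \<or> a = 1 \<or> a = 2 \<or> a = 3" "b = 0 \<or> b = 1 \<or> b = 2 \<or> b = 3"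
    "c = 0 \<or> c = 1 \<or> c = 2 \<or> c = 3"
    using abc by arith+
  then show ?thesis
    by (elim disjE)
      (simp_all add: christoffel_diagonal[OF sph_metric_diag] sph_metric_def pd_def
        deriv_g0_components[OF y] chr0_def r0 s0,
       simp_all add: field_simps power2_eq_square exp_minus r0 s0)
qed

lemma pd_christoffel_g0:
  "x \<in> chart_dom T Rb \<Longrightarrow> a < 4 \<Longrightarrow> b < 4 \<Longrightarrow> c < 4 \<Longrightarrow>
   pd k (\<lambda>y. christoffel g0 y a b c) x = pd k (chr0 a b c) x"
  by (rule pd_cong_chart_dom[of x T Rb]) (auto simp: christoffel_g0)

lemma deriv_chr0_202_dR:
  "(t,R) \<in> open_rect T Rb \<Longrightarrow> deriv (\<lambda>s. dt r t s / r t s) R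
    = (dR (dt r) t R * r t R - dt r t R * dR r t R) / (r t R)\<^sup>2"
  by (rule DERIV_imp_deriv) (auto intro!: derivative_eq_intros smooth2_has_dR smooth_derivs
      simp: power2_eq_square dest: r_pos_open)

lemma deriv_chr0_202_dt:
  "(t,R) \<in> open_rect T Rb \<Longrightarrow> deriv (\<lambda>s. dt r s R / r s R) t
    = (dt (dt r) t R * r t R - dt r t R * dt r t R) / (r t R)\<^sup>2"
  by (rule DERIV_imp_deriv) (auto intro!: derivative_eq_intros smooth2_has_dt smooth_derivs
      simp: power2_eq_square dest: r_pos_open)

lemma deriv_chr0_212_dR:
  "(t,R) \<in> open_rect T Rb \<Longrightarrow> deriv (\<lambda>s. dR r t s / r t s) R
    = (dR (dR r) t R * r t R - dR r t R * dR r t R) / (r t R)\<^sup>2"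
  by (rule DERIV_imp_deriv) (auto intro!: derivative_eq_intros smooth2_has_dR smooth_derivs
      simp: power2_eq_square dest: r_pos_open)

lemma deriv_chr0_011_dt:
  "(t,R) \<in> open_rect T Rb \<Longrightarrow> deriv (\<lambda>s. dt \<Psi> s R * exp (2 * \<Psi> s R)) t
    = dt (dt \<Psi>) t R * exp (2 * \<Psi> t R) + dt \<Psi> t R * (2 * dt \<Psi> t R * exp (2 * \<Psi> t R))"
  by (rule DERIV_imp_deriv) (auto intro!: derivative_eq_intros smooth2_has_dt smooth_derivs)

lemma deriv_chr0_022_dt:
  "(t,R) \<in> open_rect T Rb \<Longrightarrow> deriv (\<lambda>s. r s R * dt r s R) t
    = dt r t R * dt r t R + r t R * dt (dt r) t R"
  by (rule DERIV_imp_deriv) (auto intro!: derivative_eq_intros smooth2_has_dt smooth_derivs)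

lemma deriv_chr0_122_dR:
  "(t,R) \<in> open_rect T Rb \<Longrightarrow> deriv (\<lambda>s. - (r t s * dR r t s * exp (- (2 * \<Psi> t s)))) R
    = - ((dR r t R * dR r t R + r t R * dR (dR r) t R) * exp (- (2 * \<Psi> t R))
        - r t R * dR r t R * (2 * dR \<Psi> t R) * exp (- (2 * \<Psi> t R)))"
  by (rule DERIV_imp_deriv) (auto intro!: derivative_eq_intros smooth2_has_dR smooth_derivs
      simp: algebra_simps)

lemmas ricci_g0_unfold = ricci_def sum_lessThan_4 christoffel_g0 pd_christoffel_g0

lemmas chr0_derivs = chr0_def pd_def deriv_fold_dt deriv_fold_dR deriv_cos_over_sin
  deriv_chr0_202_dR deriv_chr0_202_dt deriv_chr0_212_dR deriv_chr0_011_dt deriv_chr0_022_dt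
  deriv_chr0_122_dR

lemma ricci_g0_00:
  assumes x: "x \<in> chart_dom T Rb"
  shows "ricci g0 x 0 0 = - dt (dt \<Psi>) (x 0) (x 1) - (dt \<Psi> (x 0) (x 1))\<^sup>2
    - 2 * dt (dt r) (x 0) (x 1) / r (x 0) (x 1)"
  using r_nonzero[OF x]
  by (simp add: ricci_g0_unfold x)
    (simp add: chr0_derivs chart_dom_open_rect[OF x] chart_dom_theta[OF x],
     simp add: field_simps power2_eq_square)

lemma ricci_g0_01:
  assumes x: "x \<in> chart_dom T Rb"
  shows "ricci g0 x 0 1 = 2 * (dR r (x 0) (x 1) * dt \<Psi> (x 0) (x 1) - dR (dt r) (x 0) (x 1)) / r (x 0) (x 1)"
  using r_nonzero[OF x]
  by (simp add: ricci_g0_unfold x)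
    (simp add: chr0_derivs chart_dom_open_rect[OF x] chart_dom_theta[OF x],
     simp add: field_simps power2_eq_square)

lemma ricci_g0_11:
  assumes x: "x \<in> chart_dom T Rb"
  shows "ricci g0 x 1 1 = exp (2 * \<Psi> (x 0) (x 1)) * (dt (dt \<Psi>) (x 0) (x 1) + (dt \<Psi> (x 0) (x 1))\<^sup>2
     + 2 * dt \<Psi> (x 0) (x 1) * dt r (x 0) (x 1) / r (x 0) (x 1))
     - 2 * dR (dR r) (x 0) (x 1) / r (x 0) (x 1) + 2 * dR \<Psi> (x 0) (x 1) * dR r (x 0) (x 1) / r (x 0) (x 1)"
  using r_nonzero[OF x]
  by (simp add: ricci_g0_unfold x)
    (simp add: chr0_derivs chart_dom_open_rect[OF x] chart_dom_theta[OF x],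
     simp add: field_simps power2_eq_square)

lemma ricci_g0_22:
  assumes x: "x \<in> chart_dom T Rb"
  shows "ricci g0 x 2 2 = r (x 0) (x 1) * dt (dt r) (x 0) (x 1) + (dt r (x 0) (x 1))\<^sup>2
     + r (x 0) (x 1) * dt r (x 0) (x 1) * dt \<Psi> (x 0) (x 1) + 1
     - exp (- (2 * \<Psi> (x 0) (x 1))) * (r (x 0) (x 1) * dR (dR r) (x 0) (x 1) + (dR r (x 0) (x 1))\<^sup>2
         - r (x 0) (x 1) * dR r (x 0) (x 1) * dR \<Psi> (x 0) (x 1))"
  using r_nonzero[OF x] sin_gt_zero[of "x 2"] chart_dom_theta[OF x]
  by (simp add: ricci_g0_unfold x)
    (simp add: chr0_derivs chart_dom_open_rect[OF x] chart_dom_theta[OF x],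
     simp add: field_simps power2_eq_square sin_squared_eq)

end

section \<open>Dust with a diffusion scalar field\<close>

definition comoving_velocity :: "(real \<Rightarrow> real \<Rightarrow> real) \<Rightarrow> vfield" where
  "comoving_velocity \<Phi> x \<mu> = (if \<mu> = 0 then exp (- \<Phi> (x 0) (x 1)) else 0)"

definition equator :: "real \<Rightarrow> real \<Rightarrow> pt" where
  "equator t R = (\<lambda>i. if i = 0 then t else if i = 1 then R else if i = 2 then pi/2 else 0)"

lemma equator_simps [simp]:
  "equator t R 0 = t" "equator t R (Suc 0) = R" "equator t R 1 = R" "equator t R 2 = pi/2"
  by (simp_all add: equator_def)

lemma equator_chart_dom: "(t,R) \<in> open_rect T Rb \<Longrightarrow> equator t R \<in> chart_dom T Rb"
  by (simp add: chart_dom_def)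

locale dust_scalar_solution = comoving_metric \<Psi> r T Rb
  for \<Psi> r :: "real \<Rightarrow> real \<Rightarrow> real" and T :: ereal and Rb :: real +
  fixes \<Phi> \<rho> n \<phi> :: "real \<Rightarrow> real \<Rightarrow> real" and \<sigma> :: real
  assumes T_pos: "0 < T" and Rb_pos: "0 < Rb" and sigma_nz: "\<sigma> \<noteq> 0"
    and continuous: "\<And>f. f \<in> {\<Phi>, \<Psi>, r, \<rho>, n, \<phi>} \<Longrightarrow>
      continuous_on (closed_rect T Rb) (\<lambda>(t,R). f t R)"
    and smooth_Phi: "smooth2 (open_rect T Rb) \<Phi>" and smooth_n: "smooth2 (open_rect T Rb) n"
    and smooth_phi: "smooth2 (open_rect T Rb) \<phi>"
    and Phi_boundary: "\<And>t. 0 \<le> t \<Longrightarrow> ereal t < T \<Longrightarrow> \<Phi> t Rb = 0"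
    and r_initial: "\<And>R. 0 \<le> R \<Longrightarrow> R < Rb \<Longrightarrow> r 0 R = R"
    and rho_nz: "\<And>t R. (t,R) \<in> open_rect T Rb \<Longrightarrow> \<rho> t R \<noteq> 0"
    and n_nz: "\<And>t R. 0 \<le> t \<Longrightarrow> ereal t < T \<Longrightarrow> 0 \<le> R \<Longrightarrow> R < Rb \<Longrightarrow> n t R \<noteq> 0"
    and geodesic: "\<And>x \<nu>. x \<in> chart_dom T Rb \<Longrightarrow> \<nu> < 4 \<Longrightarrow>
      lift \<rho> x * (\<Sum>m<4. comoving_velocity \<Phi> x m
        * cov_deriv (sph_metric \<Phi> \<Psi> r) (comoving_velocity \<Phi>) x m \<nu>) = 0"
    and number_conservation: "\<And>x. x \<in> chart_dom T Rb \<Longrightarrow>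
      divergence (sph_metric \<Phi> \<Psi> r) (\<lambda>y \<mu>. lift n y * comoving_velocity \<Phi> y \<mu>) x = 0"
    and einstein: "\<And>x \<mu> \<nu>. x \<in> chart_dom T Rb \<Longrightarrow> \<mu> < 4 \<Longrightarrow> \<nu> < 4 \<Longrightarrow>
      ricci (sph_metric \<Phi> \<Psi> r) x \<mu> \<nu>
        - (1/2) * sph_metric \<Phi> \<Psi> r x \<mu> \<nu> * scalar_curv (sph_metric \<Phi> \<Psi> r) x
        + lift \<phi> x * sph_metric \<Phi> \<Psi> r x \<mu> \<nu>
      = lift \<rho> x * lower (sph_metric \<Phi> \<Psi> r) (comoving_velocity \<Phi>) x \<mu>
          * lower (sph_metric \<Phi> \<Psi> r) (comoving_velocity \<Phi>) x \<nu>"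
    and scalar_field: "\<And>x \<nu>. x \<in> chart_dom T Rb \<Longrightarrow> \<nu> < 4 \<Longrightarrow>
      pd \<nu> (lift \<phi>) x = \<sigma> * (lift n x * lower (sph_metric \<Phi> \<Psi> r) (comoving_velocity \<Phi>) x \<nu>)"
begin

abbreviation "g \<equiv> sph_metric \<Phi> \<Psi> r"
abbreviation "u \<equiv> comoving_velocity \<Phi>"

lemma zero_less_T: "ereal 0 < T"
  using T_pos by (simp add: zero_ereal_def)

lemma continuous_on_slice_R:
  "f \<in> {\<Phi>, \<Psi>, r, \<rho>, n, \<phi>} \<Longrightarrow> 0 \<le> t \<Longrightarrow> ereal t < T \<Longrightarrow> 0 \<le> a \<Longrightarrow> b \<le> Rb \<Longrightarrow>
    continuous_on {a..b} (f t)"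
  using continuous_on_compose_pair[OF continuous, of f "{a..b}" "\<lambda>_. t" "\<lambda>s. s"]
  by (auto intro!: continuous_intros simp: closed_rect_def)

lemma continuous_on_slice_t:
  assumes f: "f \<in> {\<Phi>, \<Psi>, r, \<rho>, n, \<phi>}" and "0 \<le> a" "ereal b < T" "0 \<le> R" "R \<le> Rb"
  shows "continuous_on {a..b} (\<lambda>s. f s R)"
proof (rule continuous_on_compose_pair[OF continuous[OF f]])
  fix s assume s: "s \<in> {a..b}"
  have "ereal s < T" using s assms(3) by (metis atLeastAtMost_iff ereal_less_eq(3) order_le_less_trans)
  then show "(s, R) \<in> closed_rect T Rb" using s assms by (auto simp: closed_rect_def)
qed (auto intro!: continuous_intros)

lemma continuous_on_closed_rect_compose:
  "f \<in> {\<Phi>, \<Psi>, r, \<rho>, n, \<phi>} \<Longrightarrow> continuous_on A h1 \<Longrightarrow> continuous_on A h2 \<Longrightarrow>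
    (\<And>p. p \<in> A \<Longrightarrow> (h1 p, h2 p) \<in> closed_rect T Rb) \<Longrightarrow> continuous_on A (\<lambda>p. f (h1 p) (h2 p))"
  by (rule continuous_on_compose_pair[OF continuous])

subsection \<open>Comoving time is proper time\<close>

lemma dR_Phi_zero:
  assumes tR: "(t,R) \<in> open_rect T Rb"
  shows "dR \<Phi> t R = 0"
proof -
  have x: "equator t R \<in> chart_dom T Rb" using equator_chart_dom[OF tR] .
  have "deriv (\<lambda>s. - exp (2 * \<Phi> t s)) R = - (2 * dR \<Phi> t R * exp (2 * \<Phi> t R))"
    by (rule DERIV_imp_deriv) (auto intro!: derivative_eq_intros smooth2_has_dR[OF smooth_Phi tR])
  then have "christoffel g (equator t R) 1 0 0 = dR \<Phi> t R * exp (2 * \<Phi> t R) / exp (2 * \<Psi> t R)"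
    by (subst christoffel_diagonal) (simp_all add: sph_metric_def pd_def)
  moreover have "(\<Sum>m<4. u (equator t R) m * cov_deriv g u (equator t R) m 1)
      = exp (- \<Phi> t R) * exp (- \<Phi> t R) * christoffel g (equator t R) 1 0 0"
    by (simp add: sum_lessThan_4 cov_deriv_def pd_const comoving_velocity_def)
  ultimately show ?thesis using geodesic[OF x, of 1] rho_nz[OF tR] by (simp add: lift_def)
qed

lemma Phi_zero:
  assumes p: "(t,R) \<in> closed_rect T Rb"
  shows "\<Phi> t R = 0"
proof -
  have "(\<lambda>(t,R). \<Phi> t R) (t,R) = (\<lambda>_. 0) (t,R)"
  proof (rule continuous_on_closed_rect_eq[OF Rb_pos continuous _ _ p])
    fix t R assume tR: "(t,R) \<in> open_rect T Rb"
    then have "0 < t" "ereal t < T" "R < Rb" by (auto simp: open_rect_def)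
    have "\<Phi> t Rb = \<Phi> t R"
    proof (rule DERIV_isconst_end[OF \<open>R < Rb\<close>])
      show "continuous_on {R..Rb} (\<Phi> t)"
        using continuous_on_slice_R[of \<Phi> t R Rb] tR by (simp add: open_rect_def)
      fix s assume "R < s" "s < Rb"
      then have s: "(t,s) \<in> open_rect T Rb" using tR by (auto simp: open_rect_def)
      show "DERIV (\<Phi> t) s :> 0" using smooth2_has_dR[OF smooth_Phi s] dR_Phi_zero[OF s] by simp
    qed
    then show "(\<lambda>(t,R). \<Phi> t R) (t,R) = (\<lambda>_. 0) (t,R)"
      using Phi_boundary \<open>0 < t\<close> \<open>ereal t < T\<close> by simp
  qed auto
  then show ?thesis by simp
qed

lemma Phi_zero_chart_dom: "y \<in> chart_dom T Rb \<Longrightarrow> \<Phi> (y 0) (y (Suc 0)) = 0"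
  by (rule Phi_zero) (use open_rect_closed_rect[OF chart_dom_open_rect] in blast)

lemma g_eq_g0: "y \<in> chart_dom T Rb \<Longrightarrow> g y = g0 y"
  using Phi_zero_chart_dom by (auto simp: sph_metric_def fun_eq_iff)

lemma u_chart_dom: "y \<in> chart_dom T Rb \<Longrightarrow> u y = (\<lambda>\<mu>. if \<mu> = 0 then 1 else 0)"
  using Phi_zero_chart_dom by (auto simp: comoving_velocity_def fun_eq_iff)

lemma christoffel_g_eq_g0:
  assumes y: "y \<in> chart_dom T Rb"
  shows "christoffel g y a b c = christoffel g0 y a b c"
proof -
  have "pd k (\<lambda>y. g y i j) y = pd k (\<lambda>y. g0 y i j) y" for k i j
    by (rule pd_cong_chart_dom[OF y]) (simp add: g_eq_g0)
  then show ?thesis by (simp only: christoffel_def diag_inv_def g_eq_g0[OF y])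
qed

lemma ricci_g_eq_g0:
  assumes x: "x \<in> chart_dom T Rb"
  shows "ricci g x b c = ricci g0 x b c"
proof -
  have "pd k (\<lambda>y. christoffel g y i j l) x = pd k (\<lambda>y. christoffel g0 y i j l) x" for k i j l
    by (rule pd_cong_chart_dom[OF x]) (simp add: christoffel_g_eq_g0)
  then show ?thesis unfolding ricci_def using christoffel_g_eq_g0[OF x] by simp
qed

lemma lower_u_equator:
  assumes tR: "(t,R) \<in> open_rect T Rb"
  shows "lower g u (equator t R) 0 = -1" "lower g u (equator t R) 1 = 0"
    "lower g u (equator t R) 2 = 0"
  using Phi_zero[OF open_rect_closed_rect[OF tR]]
  by (simp_all add: lower_def sum_lessThan_4 sph_metric_def comoving_velocity_def)

lemma number_conservation_tR:
  assumes tR: "(t,R) \<in> open_rect T Rb"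
  shows "r t R * dt n t R + n t R * r t R * dt \<Psi> t R + 2 * n t R * dt r t R = 0"
proof -
  have x: "equator t R \<in> chart_dom T Rb" using equator_chart_dom[OF tR] .
  have pd_nu: "pd m (\<lambda>y. lift n y * u y m) (equator t R)
      = pd m (\<lambda>y. lift n y * (if m = 0 then 1 else 0)) (equator t R)" for m
    by (rule pd_cong_chart_dom[OF x]) (simp add: u_chart_dom)
  have r0: "r t R \<noteq> 0" using r_pos_open[OF tR] by simp
  then have "dt n t R + n t R * (dt \<Psi> t R + 2 * dt r t R / r t R) = 0"
    using number_conservation[OF x] unfolding divergence_def pd_nu
    by (simp add: sum_lessThan_4 christoffel_g_eq_g0[OF x] christoffel_g0[OF x] u_chart_dom[OF x]
        chr0_def lift_def pd_def deriv_fold_dt pd_const field_simps)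
  then show ?thesis using r0 by (simp add: field_simps)
qed

lemma scalar_field_tR:
  assumes tR: "(t,R) \<in> open_rect T Rb"
  shows "dt \<phi> t R = - \<sigma> * n t R" "dR \<phi> t R = 0"
  using scalar_field[OF equator_chart_dom[OF tR], of 0] scalar_field[OF equator_chart_dom[OF tR], of 1]
  using lower_u_equator(2)[OF tR, unfolded One_nat_def]
  by (simp_all add: lower_u_equator[OF tR] pd_def lift_def deriv_fold_dt deriv_fold_dR)

lemma einstein_equator:
  assumes tR: "(t,R) \<in> open_rect T Rb" and "\<mu> < 4" "\<nu> < 4"
  shows "ricci g0 (equator t R) \<mu> \<nu> - (1/2) * g (equator t R) \<mu> \<nu> * scalar_curv g (equator t R)
      + \<phi> t R * g (equator t R) \<mu> \<nu>
    = \<rho> t R * lower g u (equator t R) \<mu> * lower g u (equator t R) \<nu>"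
  using einstein[OF equator_chart_dom[OF tR] assms(2,3)] ricci_g_eq_g0[OF equator_chart_dom[OF tR]]
  by (simp add: lift_def)

lemma dR_dt_r:
  assumes tR: "(t,R) \<in> open_rect T Rb"
  shows "dR (dt r) t R = dR r t R * dt \<Psi> t R"
proof -
  have "ricci g0 (equator t R) 0 1 = 0"
    using einstein_equator[OF tR, of 0 1] lower_u_equator[OF tR] by (simp add: sph_metric_def)
  then show ?thesis
    using ricci_g0_01[OF equator_chart_dom[OF tR]] r_pos_open[OF tR] by simp
qed

text \<open>The \<open>tt\<close> equation and the isotropy \<open>G\<^sup>R\<^sub>R = G\<^sup>\<theta>\<^sub>\<theta>\<close> of the spatial stresses, with the
  unknown scalar curvature and \<open>\<phi>\<close> eliminated.\<close>
lemma einstein_eliminated: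
  assumes tR: "(t,R) \<in> open_rect T Rb"
  shows "\<rho> t R = ricci g0 (equator t R) 0 0 + ricci g0 (equator t R) 1 1 / exp (2 * \<Psi> t R)"
    and "ricci g0 (equator t R) 1 1 / exp (2 * \<Psi> t R) = ricci g0 (equator t R) 2 2 / (r t R)\<^sup>2"
proof -
  let ?S = "(1/2) * scalar_curv g (equator t R) - \<phi> t R"
  have Phi: "\<Phi> t R = 0" using Phi_zero[OF open_rect_closed_rect[OF tR]] .
  have "ricci g0 (equator t R) 0 0 + ?S = \<rho> t R"
    using einstein_equator[OF tR, of 0 0] lower_u_equator[OF tR] Phi by (simp add: sph_metric_def)
  moreover have q1: "ricci g0 (equator t R) 1 1 / exp (2 * \<Psi> t R) = ?S"
    using einstein_equator[OF tR, of 1 1] lower_u_equator[OF tR]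
    by (simp add: sph_metric_def field_simps)
  moreover have "ricci g0 (equator t R) 2 2 / (r t R)\<^sup>2 = ?S"
    using einstein_equator[OF tR, of 2 2] lower_u_equator[OF tR] r_pos_open[OF tR]
    by (simp add: sph_metric_def field_simps)
  ultimately show "\<rho> t R = ricci g0 (equator t R) 0 0 + ricci g0 (equator t R) 1 1 / exp (2 * \<Psi> t R)"
    and "ricci g0 (equator t R) 1 1 / exp (2 * \<Psi> t R) = ricci g0 (equator t R) 2 2 / (r t R)\<^sup>2"
    by simp_all
qed


subsection \<open>Homogeneity of the scalar field and of the number density\<close>

abbreviation "R0 \<equiv> Rb / 2"

lemma R0_bounds: "0 < R0" "R0 < Rb"
  using Rb_pos by auto

lemma open_rect_R0: "(t,R) \<in> open_rect T Rb \<Longrightarrow> (t,R0) \<in> open_rect T Rb"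
  using R0_bounds by (simp add: open_rect_def)

lemma phi_indep_R:
  assumes tR: "(t,R) \<in> open_rect T Rb"
  shows "\<phi> t R = \<phi> t R0"
proof (rule DERIV_isconst3[of 0 Rb R R0 "\<phi> t", OF Rb_pos])
  show "R \<in> {0<..<Rb}" "R0 \<in> {0<..<Rb}" using tR R0_bounds by (auto simp: open_rect_def)
  fix s assume "s \<in> {0<..<Rb}"
  then have s: "(t,s) \<in> open_rect T Rb" using tR by (auto simp: open_rect_def)
  show "DERIV (\<phi> t) s :> 0" using smooth2_has_dR[OF smooth_phi s] scalar_field_tR(2)[OF s] by simp
qed

lemma n_indep_R:
  assumes tR: "(t,R) \<in> open_rect T Rb"
  shows "n t R = n t R0"
proof -
  have "dt \<phi> t R = deriv (\<lambda>s. \<phi> s R0) t"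
    by (rule dt_local[OF tR]) (simp add: phi_indep_R)
  then have "dt \<phi> t R = dt \<phi> t R0" by (simp add: deriv_fold_dt)
  then show ?thesis
    using scalar_field_tR(1)[OF tR] scalar_field_tR(1)[OF open_rect_R0[OF tR]] sigma_nz by simp
qed

lemma dt_n_indep_R:
  assumes tR: "(t,R) \<in> open_rect T Rb"
  shows "dt n t R = dt n t R0"
proof -
  have "dt n t R = deriv (\<lambda>s. n s R0) t"
    by (rule dt_local[OF tR]) (simp add: n_indep_R)
  then show ?thesis by (simp add: deriv_fold_dt)
qed

lemma indep_R_closed_rect:
  assumes f: "f \<in> {\<Phi>, \<Psi>, r, \<rho>, n, \<phi>}" and h: "\<And>t R. (t,R) \<in> open_rect T Rb \<Longrightarrow> f t R = f t R0"
    and p: "(t,R) \<in> closed_rect T Rb"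
  shows "f t R = f t R0"
proof -
  have "(\<lambda>(t,R). f t R) (t,R) = (\<lambda>p. f (fst p) R0) (t,R)"
  proof (rule continuous_on_closed_rect_eq[OF Rb_pos continuous[OF f] _ _ p])
    show "continuous_on (closed_rect T Rb) (\<lambda>p. f (fst p) R0)"
      by (rule continuous_on_closed_rect_compose[OF f])
        (auto intro!: continuous_intros simp: closed_rect_def R0_bounds less_imp_le)
  qed (auto simp: h)
  then show ?thesis by simp
qed

lemma n_initial_indep_R: "0 \<le> R \<Longrightarrow> R \<le> Rb \<Longrightarrow> n 0 R = n 0 R0"
  by (rule indep_R_closed_rect[of n]) (auto intro: n_indep_R simp: closed_rect_def zero_less_T)

lemma continuous_on_closed_rect:
  "f \<in> {\<Phi>, \<Psi>, r, \<rho>, n, \<phi>} \<Longrightarrow> continuous_on (closed_rect T Rb) (\<lambda>p. f (fst p) (snd p))"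
  by (rule continuous_on_closed_rect_compose) (auto intro!: continuous_intros)

lemma continuous_on_closed_rect_at_R0:
  "f \<in> {\<Phi>, \<Psi>, r, \<rho>, n, \<phi>} \<Longrightarrow> continuous_on (closed_rect T Rb) (\<lambda>p. f (fst p) R0)"
  by (rule continuous_on_closed_rect_compose)
    (auto intro!: continuous_intros simp: closed_rect_def R0_bounds less_imp_le)

lemma continuous_on_closed_rect_initial:
  "f \<in> {\<Phi>, \<Psi>, r, \<rho>, n, \<phi>} \<Longrightarrow> continuous_on (closed_rect T Rb) (\<lambda>p. f 0 (snd p))"
  by (rule continuous_on_closed_rect_compose)
    (auto intro!: continuous_intros simp: closed_rect_def zero_less_T)

subsection \<open>The areal radius is linear in \<open>R\<close>\<close>

text \<open>Its \<open>R\<close>-derivative is \<open>3 r \<partial>\<^sub>Rr\<close> times the number conservation law, by \<open>dR_dt_r\<close>.\<close>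
lemma dt_n_r_cube_indep_R:
  assumes tR: "(t,R) \<in> open_rect T Rb"
  shows "dt n t R * (r t R)^3 + 3 * n t R * (r t R)^2 * dt r t R
    = dt n t R0 * (r t R0)^3 + 3 * n t R0 * (r t R0)^2 * dt r t R0"
proof -
  define f where "f s = dt n t R0 * (r t s)^3 + 3 * n t R0 * (r t s)^2 * dt r t s" for s
  have "f R = f R0"
  proof (rule DERIV_isconst3[of 0 Rb R R0 f, OF Rb_pos])
    show "R \<in> {0<..<Rb}" "R0 \<in> {0<..<Rb}" using tR R0_bounds by (auto simp: open_rect_def)
    fix s assume "s \<in> {0<..<Rb}"
    then have s: "(t,s) \<in> open_rect T Rb" using tR by (auto simp: open_rect_def)
    have "DERIV f s :> dt n t R0 * (3 * (r t s)^2 * dR r t s)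
        + 3 * n t R0 * (2 * r t s * dR r t s * dt r t s + (r t s)^2 * dR (dt r) t s)"
      unfolding f_def
      by (auto intro!: derivative_eq_intros smooth2_has_dR[OF _ s] smooth_derivs
          simp: algebra_simps power2_eq_square power3_eq_cube)
    moreover have "dt n t R0 * (3 * (r t s)^2 * dR r t s)
        + 3 * n t R0 * (2 * r t s * dR r t s * dt r t s + (r t s)^2 * dR (dt r) t s)
      = 3 * r t s * dR r t s * (r t s * dt n t s + n t s * r t s * dt \<Psi> t s + 2 * n t s * dt r t s)"
      using n_indep_R[OF s] dt_n_indep_R[OF s] dR_dt_r[OF s] by (simp add: algebra_simps power2_eq_square)
    ultimately show "DERIV f s :> 0" using number_conservation_tR[OF s] by simp
  qed
  then show ?thesis unfolding f_def using n_indep_R[OF tR] dt_n_indep_R[OF tR] by simp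
qed

lemma ereal_less_T_mono:
  assumes "s < t" "ereal t < T"
  shows "ereal s < T"
  using assms(1) by (intro less_trans[OF _ assms(2)]) simp

lemma ball_number_difference_open:
  assumes tR: "(t,R) \<in> open_rect T Rb"
  shows "n t R0 * ((r t R)^3 - (r t R0)^3) = n 0 R0 * (R^3 - R0^3)"
proof -
  have t: "0 < t" "ereal t < T" and R: "0 < R" "R < Rb" using tR by (auto simp: open_rect_def)
  define h where "h s = n s R * (r s R)^3 - n s R0 * (r s R0)^3" for s
  have "h t = h 0"
  proof (rule DERIV_isconst_end[OF t(1)])
    show "continuous_on {0..t} h" unfolding h_def
      using R R0_bounds t by (auto intro!: continuous_intros continuous_on_slice_t)
    fix s assume s: "0 < s" "s < t"
    then have sR: "(s,R) \<in> open_rect T Rb" and sR0: "(s,R0) \<in> open_rect T Rb"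
      using ereal_less_T_mono[OF s(2) t(2)] R R0_bounds by (auto simp: open_rect_def)
    have "DERIV h s :> (dt n s R * (r s R)^3 + 3 * n s R * (r s R)^2 * dt r s R)
        - (dt n s R0 * (r s R0)^3 + 3 * n s R0 * (r s R0)^2 * dt r s R0)"
      unfolding h_def
      by (auto intro!: derivative_eq_intros smooth2_has_dt[OF _ sR] smooth2_has_dt[OF _ sR0]
          smooth_n smooth_r simp: algebra_simps power2_eq_square power3_eq_cube)
    then show "DERIV h s :> 0" using dt_n_r_cube_indep_R[OF sR] by simp
  qed
  moreover have "r 0 R = R" "r 0 R0 = R0" using r_initial R R0_bounds by auto
  ultimately show ?thesis
    unfolding h_def using n_indep_R[OF tR] n_initial_indep_R[of R] R by (simp add: algebra_simps)
qed

lemma shell_number_open: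
  assumes tR: "(t,R) \<in> open_rect T Rb"
  shows "exp (\<Psi> t R) * (r t R)^2 * n t R0 = exp (\<Psi> 0 R) * R^2 * n 0 R0"
proof -
  have t: "0 < t" "ereal t < T" and R: "0 < R" "R < Rb" using tR by (auto simp: open_rect_def)
  define h where "h s = exp (\<Psi> s R) * (r s R)^2 * n s R" for s
  have "h t = h 0"
  proof (rule DERIV_isconst_end[OF t(1)])
    show "continuous_on {0..t} h" unfolding h_def
      using R t by (auto intro!: continuous_intros continuous_on_slice_t)
    fix s assume s: "0 < s" "s < t"
    then have sR: "(s,R) \<in> open_rect T Rb"
      using ereal_less_T_mono[OF s(2) t(2)] R by (auto simp: open_rect_def)
    have "DERIV h s :> exp (\<Psi> s R) * r s R
        * (r s R * dt n s R + n s R * r s R * dt \<Psi> s R + 2 * n s R * dt r s R)"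
      unfolding h_def
      by (auto intro!: derivative_eq_intros smooth2_has_dt[OF _ sR] smooth_n smooth_derivs
          simp: algebra_simps power2_eq_square)
    then show "DERIV h s :> 0" using number_conservation_tR[OF sR] by simp
  qed
  moreover have "r 0 R = R" using r_initial R by auto
  ultimately show ?thesis
    unfolding h_def using n_indep_R[OF tR] n_initial_indep_R[of R] R by simp
qed


lemma ball_number_difference:
  assumes p: "(t,R) \<in> closed_rect T Rb"
  shows "n t R0 * ((r t R)^3 - (r t R0)^3) = n 0 R0 * (R^3 - R0^3)"
proof -
  have "(\<lambda>p. n (fst p) R0 * ((r (fst p) (snd p))^3 - (r (fst p) R0)^3)) (t,R)
      = (\<lambda>p. n 0 R0 * ((snd p)^3 - R0^3)) (t,R)"
  proof (rule continuous_on_closed_rect_eq[OF Rb_pos _ _ _ p])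
    show "continuous_on (closed_rect T Rb) (\<lambda>p. n (fst p) R0 * ((r (fst p) (snd p))^3 - (r (fst p) R0)^3))"
      by (intro continuous_on_mult continuous_on_diff continuous_on_power continuous_on_closed_rect
          continuous_on_closed_rect_at_R0) auto
  qed (auto intro!: continuous_intros simp: ball_number_difference_open)
  then show ?thesis by simp
qed

lemma shell_number:
  assumes p: "(t,R) \<in> closed_rect T Rb"
  shows "exp (\<Psi> t R) * (r t R)^2 * n t R0 = exp (\<Psi> 0 R) * R^2 * n 0 R0"
proof -
  have "(\<lambda>p. exp (\<Psi> (fst p) (snd p)) * (r (fst p) (snd p))^2 * n (fst p) R0) (t,R)
      = (\<lambda>p. exp (\<Psi> 0 (snd p)) * (snd p)^2 * n 0 R0) (t,R)"
  proof (rule continuous_on_closed_rect_eq[OF Rb_pos _ _ _ p])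
    show "continuous_on (closed_rect T Rb) (\<lambda>p. exp (\<Psi> (fst p) (snd p)) * (r (fst p) (snd p))^2 * n (fst p) R0)"
      by (intro continuous_on_mult continuous_on_exp continuous_on_power continuous_on_closed_rect
          continuous_on_closed_rect_at_R0) auto
    show "continuous_on (closed_rect T Rb) (\<lambda>p. exp (\<Psi> 0 (snd p)) * (snd p)^2 * n 0 R0)"
      by (intro continuous_on_mult continuous_on_exp continuous_on_power continuous_on_const
          continuous_on_snd continuous_on_id continuous_on_closed_rect_initial) auto
  qed (simp add: shell_number_open)
  then show ?thesis by simp
qed

lemma n_R0_nonzero: "0 \<le> t \<Longrightarrow> ereal t < T \<Longrightarrow> n t R0 \<noteq> 0"
  using n_nz R0_bounds by auto

lemma r_centre: "0 \<le> t \<Longrightarrow> ereal t < T \<Longrightarrow> r t 0 = 0"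
  using shell_number[of t 0] n_R0_nonzero Rb_pos by (simp add: closed_rect_def)

lemma ball_number: "0 \<le> t \<Longrightarrow> ereal t < T \<Longrightarrow> n t R0 * (r t R0)^3 = n 0 R0 * R0^3"
  using ball_number_difference[of t 0] r_centre Rb_pos by (simp add: closed_rect_def algebra_simps)

definition a :: "real \<Rightarrow> real" where
  "a t = r t R0 / R0"

lemma a_pos: "0 \<le> t \<Longrightarrow> ereal t < T \<Longrightarrow> 0 < a t"
  using r_pos[of t R0] R0_bounds by (simp add: a_def)

lemma r_R0: "r t R0 = a t * R0"
  using R0_bounds by (simp add: a_def)

lemma n_initial_eq:
  assumes "0 \<le> t" "ereal t < T"
  shows "n 0 R0 = n t R0 * (a t)^3"
proof -
  have "(n t R0 * (a t)^3) * R0^3 = n 0 R0 * R0^3"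
    using ball_number[OF assms] unfolding r_R0 by (metis mult.assoc power_mult_distrib)
  moreover have "R0^3 \<noteq> 0" using R0_bounds by simp
  ultimately show ?thesis by simp
qed

lemma r_eq_a_mult:
  assumes "0 \<le> t" "ereal t < T" "0 \<le> R" "R < Rb"
  shows "r t R = a t * R"
proof -
  have "n t R0 * (r t R)^3 = n 0 R0 * R^3"
    using ball_number_difference[of t R] ball_number[OF assms(1,2)] assms
    by (simp add: closed_rect_def algebra_simps)
  then have "(r t R)^3 = (a t * R)^3"
    using n_initial_eq[OF assms(1,2)] n_R0_nonzero[OF assms(1,2)] by (simp add: power_mult_distrib)
  moreover have "0 \<le> r t R"
  proof (cases "R = 0")
    case False
    then show ?thesis using r_pos[OF assms(1,2), of R] assms(3,4) by simp
  qed (simp add: r_centre[OF assms(1,2)])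
  moreover have "0 \<le> a t * R" using a_pos[OF assms(1,2)] assms(3) by simp
  ultimately show ?thesis using power_eq_iff_eq_base[of 3 "r t R" "a t * R"] by simp
qed

lemma r_eq_a_mult_open: "(t,R) \<in> open_rect T Rb \<Longrightarrow> r t R = a t * R"
  by (rule r_eq_a_mult) (auto simp: open_rect_def)

lemma exp_Psi_eq:
  assumes p: "(t,R) \<in> closed_rect T Rb"
  shows "exp (\<Psi> t R) = exp (\<Psi> 0 R) * a t"
proof -
  have "(\<lambda>p. exp (\<Psi> (fst p) (snd p))) (t,R) = (\<lambda>p. exp (\<Psi> 0 (snd p)) * a (fst p)) (t,R)"
  proof (rule continuous_on_closed_rect_eq[OF Rb_pos _ _ _ p])
    show "continuous_on (closed_rect T Rb) (\<lambda>p. exp (\<Psi> (fst p) (snd p)))"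
      by (intro continuous_on_exp continuous_on_closed_rect) auto
    show "continuous_on (closed_rect T Rb) (\<lambda>p. exp (\<Psi> 0 (snd p)) * a (fst p))"
      unfolding a_def using R0_bounds by (intro continuous_on_mult continuous_on_exp continuous_on_divide
          continuous_on_const continuous_on_closed_rect_at_R0 continuous_on_closed_rect_initial) auto
  next
    fix t R assume tR: "(t,R) \<in> open_rect T Rb"
    then have h: "0 \<le> t" "ereal t < T" "0 < R" by (auto simp: open_rect_def)
    have "exp (\<Psi> t R) * (a t * R)^2 * n t R0 = exp (\<Psi> 0 R) * R^2 * (n t R0 * (a t)^3)"
      using shell_number_open[OF tR] r_eq_a_mult_open[OF tR] n_initial_eq[OF h(1,2)] by simp
    then have "(a t)^2 * R^2 * n t R0 * exp (\<Psi> t R) = (a t)^2 * R^2 * n t R0 * (exp (\<Psi> 0 R) * a t)"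
      by (simp add: algebra_simps power_mult_distrib power3_eq_cube power2_eq_square)
    then show "(\<lambda>p. exp (\<Psi> (fst p) (snd p))) (t,R) = (\<lambda>p. exp (\<Psi> 0 (snd p)) * a (fst p)) (t,R)"
      using n_R0_nonzero[OF h(1,2)] a_pos[OF h(1,2)] h(3) by simp
  qed
  then show ?thesis by simp
qed

definition da :: "real \<Rightarrow> real" where
  "da t = dt r t R0 / R0"

definition dda :: "real \<Rightarrow> real" where
  "dda t = dt (dt r) t R0 / R0"

lemma dt_r_eq:
  assumes tR: "(t,R) \<in> open_rect T Rb"
  shows "dt r t R = da t * R"
proof -
  have "dt r t R = deriv (\<lambda>s. r s R0 / R0 * R) t"
    by (rule dt_local[OF tR]) (simp add: r_eq_a_mult_open a_def)
  also have "\<dots> = dt r t R0 / R0 * R"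
    using R0_bounds by (intro DERIV_imp_deriv)
      (auto intro!: derivative_eq_intros smooth2_has_dt[OF _ open_rect_R0[OF tR]] smooth_derivs)
  finally show ?thesis by (simp add: da_def)
qed

lemma dt_dt_r_eq:
  assumes tR: "(t,R) \<in> open_rect T Rb"
  shows "dt (dt r) t R = dda t * R"
proof -
  have "dt (dt r) t R = deriv (\<lambda>s. dt r s R0 / R0 * R) t"
    by (rule dt_local[OF tR]) (simp add: dt_r_eq da_def)
  also have "\<dots> = dt (dt r) t R0 / R0 * R"
    using R0_bounds by (intro DERIV_imp_deriv)
      (auto intro!: derivative_eq_intros smooth2_has_dt[OF _ open_rect_R0[OF tR]] smooth_derivs)
  finally show ?thesis by (simp add: dda_def)
qed

lemma dR_r_eq:
  assumes tR: "(t,R) \<in> open_rect T Rb"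
  shows "dR r t R = a t"
proof -
  have "dR r t R = deriv (\<lambda>s. a t * s) R"
    by (rule dR_local[OF tR]) (simp add: r_eq_a_mult_open)
  then show ?thesis by simp
qed

lemma dR_dR_r_eq:
  assumes tR: "(t,R) \<in> open_rect T Rb"
  shows "dR (dR r) t R = 0"
proof -
  have "dR (dR r) t R = deriv (\<lambda>s. a t) R"
    by (rule dR_local[OF tR]) (simp add: dR_r_eq)
  then show ?thesis by simp
qed

lemma dt_Psi_eq:
  assumes tR: "(t,R) \<in> open_rect T Rb"
  shows "dt \<Psi> t R = da t / a t"
proof -
  have Psi: "\<Psi> s R = \<Psi> 0 R + ln (r s R0 / R0)" if "(s,R) \<in> open_rect T Rb" for s
  proof -
    have h: "0 \<le> s" "ereal s < T" using that by (auto simp: open_rect_def)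
    have "exp (\<Psi> s R) = exp (\<Psi> 0 R + ln (a s))"
      using exp_Psi_eq[OF open_rect_closed_rect[OF that]] a_pos[OF h] by (simp add: exp_add)
    then show ?thesis by (simp add: a_def)
  qed
  have "dt \<Psi> t R = deriv (\<lambda>s. \<Psi> 0 R + ln (r s R0 / R0)) t"
    by (rule dt_local[OF tR]) (rule Psi)
  also have "\<dots> = dt r t R0 / R0 / (r t R0 / R0)"
    using r_pos_open[OF open_rect_R0[OF tR]] R0_bounds
    by (intro DERIV_imp_deriv)
      (auto intro!: derivative_eq_intros smooth2_has_dt[OF _ open_rect_R0[OF tR]] smooth_derivs)
  finally show ?thesis by (simp add: da_def a_def)
qed

lemma dt_dt_Psi_eq:
  assumes tR: "(t,R) \<in> open_rect T Rb"
  shows "dt (dt \<Psi>) t R = (dda t * a t - (da t)^2) / (a t)^2"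
proof -
  have "dt (dt \<Psi>) t R = deriv (\<lambda>s. dt r s R0 / r s R0) t"
    by (rule dt_local[OF tR]) (use R0_bounds in \<open>simp add: dt_Psi_eq da_def a_def\<close>)
  also have "\<dots> = (dt (dt r) t R0 * r t R0 - dt r t R0 * dt r t R0) / (r t R0)\<^sup>2"
    by (rule deriv_chr0_202_dt[OF open_rect_R0[OF tR]])
  also have "\<dots> = (dda t * a t - (da t)^2) / (a t)^2"
    using R0_bounds r_pos_open[OF open_rect_R0[OF tR]]
    by (simp add: da_def dda_def a_def field_simps power2_eq_square)
  finally show ?thesis .
qed


subsection \<open>Spatial curvature and density\<close>

lemmas metric_derivs = dt_r_eq dt_dt_r_eq dR_r_eq dR_dR_r_eq dt_Psi_eq dt_dt_Psi_eq r_eq_a_mult_open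

lemma exp_2Psi_eq:
  assumes "(t,R) \<in> closed_rect T Rb"
  shows "exp (2 * \<Psi> t R) = (exp (\<Psi> 0 R))^2 * (a t)^2"
  using exp_Psi_eq[OF assms] by (simp add: exp_double power_mult_distrib)

text \<open>From the isotropy of the spatial stresses.\<close>
lemma R_dR_Psi_eq:
  assumes tR: "(t,R) \<in> open_rect T Rb"
  shows "R * dR \<Psi> t R = (exp (\<Psi> 0 R))^2 - 1"
proof -
  have x: "equator t R \<in> chart_dom T Rb" using equator_chart_dom[OF tR] .
  have h: "0 \<le> t" "ereal t < T" "0 < R" using tR by (auto simp: open_rect_def)
  have ap: "0 < a t" using a_pos h by simp
  have E2: "exp (2 * \<Psi> t R) = (exp (\<Psi> 0 R))^2 * (a t)^2"
    using exp_2Psi_eq[OF open_rect_closed_rect[OF tR]] .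
  have Em: "exp (- (2 * \<Psi> t R)) = 1 / ((exp (\<Psi> 0 R))^2 * (a t)^2)"
    using E2 by (simp add: exp_minus field_simps)
  let ?c = "R * (a t)^6 * (exp (\<Psi> 0 R))^2"
  have "?c * (1 + R * dR \<Psi> t R) = ?c * (exp (\<Psi> 0 R))^2"
    using einstein_eliminated(2)[OF tR] ap h unfolding ricci_g0_11[OF x] ricci_g0_22[OF x]
    by (simp add: E2 Em metric_derivs[OF tR] field_simps power2_eq_square eval_nat_numeral)
  moreover have "?c \<noteq> 0" using ap h by simp
  ultimately show ?thesis by simp
qed

definition k_curv :: real where
  "k_curv = (1 - exp (- (2 * \<Psi> 0 R0))) / R0^2"

lemma exp_Psi_scaled:
  assumes "(t,s) \<in> closed_rect T Rb"
  shows "(a t)^2 * exp (- (2 * \<Psi> t s)) = exp (- (2 * \<Psi> 0 s))"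
  using exp_2Psi_eq[OF assms] a_pos[of t] assms
  by (simp add: closed_rect_def exp_minus exp_double field_simps)

lemma curvature_const:
  assumes "0 < R" "R < Rb"
  shows "(1 - exp (- (2 * \<Psi> 0 R))) / R^2 = k_curv"
proof -
  obtain t0 where "ereal 0 < ereal t0" "ereal t0 < T" using ereal_dense2[OF zero_less_T] by blast
  then have t0: "0 < t0" "ereal t0 < T" by auto
  define f where "f s = (1 - (a t0)^2 * exp (- (2 * \<Psi> t0 s))) / s^2" for s
  have "f R = f R0"
  proof (rule DERIV_isconst3[of 0 Rb R R0 f, OF Rb_pos])
    show "R \<in> {0<..<Rb}" "R0 \<in> {0<..<Rb}" using assms R0_bounds by auto
    fix s assume "s \<in> {0<..<Rb}"
    then have s: "(t0,s) \<in> open_rect T Rb" and s0: "0 < s" using t0 by (auto simp: open_rect_def)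
    define v where "v = (a t0)^2 * exp (- (2 * \<Psi> t0 s))"
    have "DERIV f s :> (v * (2 * dR \<Psi> t0 s) * s^2 - (1 - v) * (2 * s)) / (s^2)^2"
      unfolding f_def v_def using s0
      by (auto intro!: derivative_eq_intros smooth2_has_dR[OF _ s] smooth_derivs
          simp: power2_eq_square algebra_simps)
    moreover have "v = 1 / (exp (\<Psi> 0 s))^2"
      using exp_Psi_scaled[OF open_rect_closed_rect[OF s]] a_pos[of t0] t0 unfolding v_def
      by (simp add: exp_minus exp_double field_simps)
    then have "v * (1 + s * dR \<Psi> t0 s) = 1"
      using R_dR_Psi_eq[OF s] by simp
    moreover have "v * (2 * dR \<Psi> t0 s) * s^2 - (1 - v) * (2 * s) = 2 * s * (v * (1 + s * dR \<Psi> t0 s) - 1)"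
      by (simp add: algebra_simps power2_eq_square)
    ultimately show "DERIV f s :> 0" by simp
  qed
  moreover have "f R = (1 - exp (- (2 * \<Psi> 0 R))) / R^2" "f R0 = k_curv"
    using exp_Psi_scaled[of t0 R] exp_Psi_scaled[of t0 R0] t0 assms R0_bounds
    by (simp_all add: f_def k_curv_def closed_rect_def)
  ultimately show ?thesis by simp
qed

lemma exp_Psi_initial:
  assumes "0 \<le> R" "R < Rb"
  shows "exp (- (2 * \<Psi> 0 R)) = 1 - k_curv * R^2"
proof -
  have p: "(0,R) \<in> closed_rect T Rb" using assms zero_less_T by (simp add: closed_rect_def)
  have F: "continuous_on (closed_rect T Rb) (\<lambda>p. exp (- (2 * \<Psi> 0 (snd p))))"
    by (intro continuous_on_exp continuous_on_minus continuous_on_mult continuous_on_const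
        continuous_on_closed_rect_initial) auto
  have G: "continuous_on (closed_rect T Rb) (\<lambda>p. 1 - k_curv * (snd p)^2)"
    by (intro continuous_intros)
  have "(\<lambda>p. exp (- (2 * \<Psi> 0 (snd p)))) (t,R') = (\<lambda>p. 1 - k_curv * (snd p)^2) (t,R')"
    if "(t,R') \<in> open_rect T Rb" for t R'
    using curvature_const[of R'] that by (simp add: open_rect_def field_simps)
  from continuous_on_closed_rect_eq[OF Rb_pos F G this p] show ?thesis by simp
qed

lemma k_curv_mult_sq_less_1:
  assumes "0 \<le> R" "R < Rb"
  shows "k_curv * R^2 < 1"
  using exp_Psi_initial[OF assms] exp_gt_zero[of "- (2 * \<Psi> 0 R)"] by linarith

lemma rho_friedmann:
  assumes tR: "(t,R) \<in> open_rect T Rb"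
  shows "\<rho> t R = - 2 * dda t / a t + 2 * (da t)^2 / (a t)^2 + 2 * k_curv / (a t)^2"
proof -
  have x: "equator t R \<in> chart_dom T Rb" using equator_chart_dom[OF tR] .
  have h: "0 \<le> t" "ereal t < T" "0 < R" "R < Rb" using tR by (auto simp: open_rect_def)
  have ap: "0 < a t" using a_pos h by simp
  define w where "w = (exp (\<Psi> 0 R))^2"
  have wp: "0 < w" by (simp add: w_def)
  have E2: "exp (2 * \<Psi> t R) = w * (a t)^2"
    using exp_2Psi_eq[OF open_rect_closed_rect[OF tR]] by (simp add: w_def)
  have r00: "ricci g0 (equator t R) 0 0 = - 3 * dda t / a t"
    unfolding ricci_g0_00[OF x] using ap h
    by (simp add: metric_derivs[OF tR] field_simps power2_eq_square)
  have r11: "ricci g0 (equator t R) 1 1 / exp (2 * \<Psi> t R)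
      = dda t / a t + 2 * (da t)^2 / (a t)^2 + 2 * (R * dR \<Psi> t R) / (R^2 * w * (a t)^2)"
    unfolding ricci_g0_11[OF x] using ap h wp
    by (simp add: E2 metric_derivs[OF tR] field_simps power2_eq_square)
  have curv: "2 * (R * dR \<Psi> t R) / (R^2 * w * (a t)^2) = 2 * k_curv / (a t)^2"
  proof -
    have "w * (1 - k_curv * R^2) = 1"
      using exp_Psi_initial[of R] h by (simp add: w_def exp_minus exp_double field_simps)
    then have "R * dR \<Psi> t R = w * k_curv * R^2"
      using R_dR_Psi_eq[OF tR] by (simp add: w_def algebra_simps)
    then show ?thesis using ap h wp by (simp add: field_simps power2_eq_square)
  qed
  have "\<rho> t R = - 3 * dda t / a t + (dda t / a t + 2 * (da t)^2 / (a t)^2 + 2 * k_curv / (a t)^2)"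
    using einstein_eliminated(1)[OF tR] unfolding r00 r11 curv .
  moreover have "- 3 * dda t / a t + dda t / a t = - 2 * dda t / a t" using ap by (simp add: field_simps)
  ultimately show ?thesis by linarith
qed

lemma rho_indep_R: "(t,R) \<in> open_rect T Rb \<Longrightarrow> \<rho> t R = \<rho> t R0"
  using rho_friedmann open_rect_R0 by simp

lemma fields_homogeneous:
  assumes "0 \<le> t" "ereal t < T" "0 \<le> R" "R < Rb"
  shows "\<rho> t R = \<rho> t R0" "n t R = n t R0" "\<phi> t R = \<phi> t R0"
proof -
  have p: "(t,R) \<in> closed_rect T Rb" using assms by (simp add: closed_rect_def)
  show "\<rho> t R = \<rho> t R0" by (rule indep_R_closed_rect[of \<rho>, OF _ rho_indep_R p]) simp
  show "n t R = n t R0" by (rule indep_R_closed_rect[of n, OF _ n_indep_R p]) simp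
  show "\<phi> t R = \<phi> t R0" by (rule indep_R_closed_rect[of \<phi>, OF _ phi_indep_R p]) simp
qed

lemma u_unit:
  "0 \<le> x 0 \<Longrightarrow> ereal (x 0) < T \<Longrightarrow> 0 \<le> x 1 \<Longrightarrow> x 1 < Rb \<Longrightarrow> u x \<mu> = (if \<mu> = 0 then 1 else 0)"
  using Phi_zero[of "x 0" "x 1"] by (simp add: closed_rect_def comoving_velocity_def)

lemma metric_frw:
  assumes h: "0 \<le> x 0" "ereal (x 0) < T" "0 \<le> x 1" "x 1 < Rb" and ij: "i < 4" "j < 4"
  shows "g x i j = frw_metric a k_curv x i j"
proof -
  have p: "(x 0, x 1) \<in> closed_rect T Rb" using h by (simp add: closed_rect_def)
  have Phi: "\<Phi> (x 0) (x 1) = 0" using Phi_zero[OF p] .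
  have r: "r (x 0) (x 1) = a (x 0) * x 1" using r_eq_a_mult h by simp
  have "exp (2 * \<Psi> (x 0) (x 1)) = (exp (\<Psi> 0 (x 1)))^2 * (a (x 0))^2"
    using exp_2Psi_eq[OF p] .
  also have "(exp (\<Psi> 0 (x 1)))^2 = 1 / exp (- (2 * \<Psi> 0 (x 1)))"
    by (simp add: exp_minus exp_double divide_inverse)
  also have "\<dots> = 1 / (1 - k_curv * (x 1)^2)" using exp_Psi_initial h by simp
  finally have e2: "exp (2 * \<Psi> (x 0) (x 1)) = (a (x 0))^2 / (1 - k_curv * (x 1)^2)" by simp
  have "i = 0 \<or> i = 1 \<or> i = 2 \<or> i = 3" "j = 0 \<or> j = 1 \<or> j = 2 \<or> j = 3" using ij by arith+
  then show ?thesis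
    by (elim disjE) (simp_all add: sph_metric_def frw_metric_def power_mult_distrib
        Phi r e2 Phi[unfolded One_nat_def] r[unfolded One_nat_def] e2[unfolded One_nat_def])
qed

end

theorem mainTheorem1:
  fixes \<Phi> \<Psi> r \<rho> n \<phi> :: "real \<Rightarrow> real \<Rightarrow> real"
    and T :: ereal and Rb \<sigma> :: real
  defines "g \<equiv> sph_metric \<Phi> \<Psi> r"
    and "u \<equiv> (\<lambda>x \<mu>. if \<mu> = 0 then exp (- \<Phi> (x 0) (x 1)) else 0)"
  assumes T_pos: "0 < T" and Rb_pos: "0 < Rb" and sigma_pos: "0 < \<sigma>"
    and cont: "\<forall>f\<in>{\<Phi>, \<Psi>, r, \<rho>, n, \<phi>}.
        continuous_on {(t,R). 0 \<le> t \<and> ereal t < T \<and> 0 \<le> R \<and> R \<le> Rb} (\<lambda>(t,R). f t R)"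
    and smooth: "\<forall>f\<in>{\<Phi>, \<Psi>, r, \<rho>, n, \<phi>}.
        smooth2 {(t,R). 0 < t \<and> ereal t < T \<and> 0 < R \<and> R < Rb} f"
    and r_pos: "\<And>t R. 0 \<le> t \<Longrightarrow> ereal t < T \<Longrightarrow> 0 < R \<Longrightarrow> R < Rb \<Longrightarrow> 0 < r t R"
    and norm_Phi: "\<And>t. 0 \<le> t \<Longrightarrow> ereal t < T \<Longrightarrow> \<Phi> t Rb = 0"
    and norm_r: "\<And>R. 0 \<le> R \<Longrightarrow> R < Rb \<Longrightarrow> r 0 R = R"
    and rho_nz: "\<And>t R. 0 \<le> t \<Longrightarrow> ereal t < T \<Longrightarrow> 0 \<le> R \<Longrightarrow> R < Rb \<Longrightarrow> \<rho> t R \<noteq> 0"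
    and n_nz: "\<And>t R. 0 \<le> t \<Longrightarrow> ereal t < T \<Longrightarrow> 0 \<le> R \<Longrightarrow> R < Rb \<Longrightarrow> n t R \<noteq> 0"
    and eqs: "\<And>x. 0 < x 0 \<Longrightarrow> ereal (x 0) < T \<Longrightarrow> 0 < x 1 \<Longrightarrow> x 1 < Rb \<Longrightarrow>
        0 < x 2 \<Longrightarrow> x 2 < pi \<Longrightarrow>
        divergence g (\<lambda>y \<mu>. lift \<rho> y * u y \<mu>) x = \<sigma> * lift n x
      \<and> (\<forall>\<nu><4. lift \<rho> x * (\<Sum>m<4. u x m * cov_deriv g u x m \<nu>) = 0)
      \<and> divergence g (\<lambda>y \<mu>. lift n y * u y \<mu>) x = 0
      \<and> (\<forall>\<mu><4. \<forall>\<nu><4. ricci g x \<mu> \<nu> - (1/2) * g x \<mu> \<nu> * scalar_curv g x + lift \<phi> x * g x \<mu> \<nu>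
              = lift \<rho> x * lower g u x \<mu> * lower g u x \<nu>)
      \<and> (\<forall>\<nu><4. pd \<nu> (lift \<phi>) x = \<sigma> * (lift n x * lower g u x \<nu>))"
  shows "(\<exists>f1 f2 f3 :: real \<Rightarrow> real. \<forall>t R. 0 \<le> t \<and> ereal t < T \<and> 0 \<le> R \<and> R < Rb \<longrightarrow>
            \<rho> t R = f1 t \<and> n t R = f2 t \<and> \<phi> t R = f3 t)
       \<and> (\<exists>(a :: real \<Rightarrow> real) (k :: real).
            (\<forall>t. 0 \<le> t \<and> ereal t < T \<longrightarrow> 0 < a t)
          \<and> (\<forall>x. 0 \<le> x 0 \<and> ereal (x 0) < T \<and> 0 \<le> x 1 \<and> x 1 < Rb \<longrightarrow>
               0 < 1 - k * (x 1)\<^sup>2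
             \<and> (\<forall>i<4. \<forall>j<4. g x i j = frw_metric a k x i j)
             \<and> (\<forall>\<mu><4. u x \<mu> = (if \<mu> = 0 then 1 else 0))))"
proof -
  have u_eq: "u = comoving_velocity \<Phi>"
    by (simp add: u_def comoving_velocity_def fun_eq_iff)
  have continuous: "continuous_on (closed_rect T Rb) (\<lambda>(t,R). f t R)"
    if "f \<in> {\<Phi>, \<Psi>, r, \<rho>, n, \<phi>}" for f
    using cont that unfolding closed_rect_def by blast
  interpret dust_scalar_solution \<Psi> r T Rb \<Phi> \<rho> n \<phi> \<sigma>
    by unfold_locales
      (use T_pos Rb_pos sigma_pos continuous smooth r_pos norm_Phi norm_r rho_nz n_nz eqs in
        \<open>simp_all add: g_def u_eq open_rect_def closed_rect_def chart_dom_def\<close>)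
  show ?thesis
    unfolding g_def u_eq
    apply (intro conjI)
     apply (rule exI[of _ "\<lambda>t. \<rho> t R0"], rule exI[of _ "\<lambda>t. n t R0"], rule exI[of _ "\<lambda>t. \<phi> t R0"])
     apply (auto dest: fields_homogeneous)[1]
    apply (rule exI[of _ a], rule exI[of _ k_curv])
    apply (auto simp: a_pos k_curv_mult_sq_less_1 metric_frw u_unit)
    done
qed

end
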